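(* Fix $c \in \mathbb{R}$ and $p \in (0,1)$. For $x^{\text{obs}} > c$ let $\theta(p)$ be the unique solution $\theta$ of $F(x^{\text{obs}};\theta,c) = p$, and let $\theta^*(p) = x^{\text{obs}} - \Phi^{-1}(p)$ (the unique solution of $\Phi(x^{\text{obs}} - \theta) = p$). Then $\theta(p) - \theta^*(p) \to 0$ as $x^{\text{obs}} \to \infty$.
   Context: Let $\Phi$ denote the standard normal distribution function. For $c \in \mathbb{R}$, $a \ge c$ and $\theta \in \mathbb{R}$ define $$F(a;\theta,c) = \frac{\Phi(a-\theta) - \Phi(c-\theta)}{1-\Phi(c-\theta)}.$$ It is known that for each fixed $x^{\text{obs}} > c$ the map $\theta \mapsto F(x^{\text{obs}};\theta,c)$ is continuous and strictly decreasing from $\mathbb{R}$ onto $(0,1)$, so $\theta(p)$ is well defined. *)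

theory Defs
  imports "HOL-Probability.Probability"
begin

definition Phi :: "real \<Rightarrow> real" where
  "Phi x = measure (density lborel std_normal_density) {..x}"

text \<open>Quantile function: the unique z with Phi z = p (meaningful for 0 < p < 1).\<close>
definition Phi_inv :: "real \<Rightarrow> real" where
  "Phi_inv p = (THE z. Phi z = p)"

definition F :: "real \<Rightarrow> real \<Rightarrow> real \<Rightarrow> real" where
  "F a \<theta> c = (Phi (a - \<theta>) - Phi (c - \<theta>)) / (1 - Phi (c - \<theta>))"

definition theta_p :: "real \<Rightarrow> real \<Rightarrow> real \<Rightarrow> real" where
  "theta_p c x_obs p = (THE \<theta>. F x_obs \<theta> c = p)"

end

theory Submission
  imports Defs "HOL-Real_Asymp.Real_Asymp"
begin

text \<open>
  Writing \<theta> = x - q + k with q = \<Phi>\<inverse>(p), the conditioning event has probability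
  1 - \<Phi>(c - x + q - k) \<rightarrow> 1 as x \<rightarrow> \<infinity>, so F(x; x - q + k, c) \<rightarrow> \<Phi>(q - k), which lies below p
  for k > 0 and above p for k < 0. Since F is strictly decreasing in \<theta>, eventually
  |\<theta>(p) - \<theta>*(p)| < k for every k > 0. The monotonicity in \<theta> amounts to the survival ratio
  (1 - \<Phi>(u + d)) / (1 - \<Phi>(u)) decreasing in u, i.e. to the increase of the normal
  hazard rate, which follows from the Mills ratio bound u (1 - \<Phi>(u)) < \<phi>(u).
\<close>

interpretation std_normal: real_distribution "density lborel std_normal_density"
  unfolding real_distribution_def real_distribution_axioms_def
  using prob_space_normal_density by auto

lemma Phi_eq_cdf: "Phi = cdf (density lborel std_normal_density)"
  by (auto simp: fun_eq_iff Phi_def cdf_def)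

lemma Phi_diff_eq_integral:
  assumes "a \<le> b"
  shows "Phi b - Phi a = integral {a..b} std_normal_density"
proof -
  let ?M = "density lborel std_normal_density" and ?I = "{a<..b}"
  have diff: "Phi b - Phi a = measure ?M ?I"
    using std_normal.cdf_diff_eq[of a b] assms by (cases "a = b") (auto simp: Phi_eq_cdf)
  have "emeasure ?M ?I = (\<integral>\<^sup>+x\<in>?I. ennreal (std_normal_density x)\<partial>lborel)"
    by (subst emeasure_density) auto
  then have "(\<integral>\<^sup>+x. (indicator ?I x * std_normal_density x) \<partial>lborel) = ennreal (measure ?M ?I)"
    using std_normal.emeasure_eq_measure[of ?I] by (auto intro!: nn_integral_cong simp: indicator_def)
  then have "((\<lambda>x. indicator ?I x * std_normal_density x) has_integral measure ?M ?I) UNIV"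
    by (intro nn_integral_has_integral) auto
  then have "(std_normal_density has_integral measure ?M ?I) ?I"
    by (simp only: indicator_times_eq_if has_integral_restrict_UNIV)
  then have "(std_normal_density has_integral measure ?M ?I) {a..b}"
    by (subst has_integral_spike_set_eq[of "{a..b}" ?I]) (rule negligible_subset[of "{a}"], auto)+
  then show ?thesis using diff by (simp add: integral_unique)
qed

lemma continuous_on_std_normal_density: "continuous_on A std_normal_density"
  unfolding normal_density_def by (intro continuous_intros) auto

lemma Phi_has_real_derivative: "(Phi has_real_derivative std_normal_density x) (at x)"
proof -
  let ?G = "\<lambda>t. Phi (x - 1) + integral {x - 1..t} std_normal_density"
  have "(?G has_real_derivative 0 + std_normal_density x) (at x within {x - 1..x + 1})"
    by (intro DERIV_add DERIV_const integral_has_real_derivative continuous_on_std_normal_density) auto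
  then have "(?G has_real_derivative std_normal_density x) (at x)"
    using at_within_Icc_at[of "x - 1" x "x + 1"] by simp
  then show ?thesis
    by (rule has_field_derivative_transform_within_open[where S = "{x - 1<..<x + 1}"])
       (auto simp: Phi_diff_eq_integral[symmetric])
qed

lemma has_real_derivative_Phi [derivative_intros]:
  "(f has_real_derivative f') (at x within S) \<Longrightarrow>
    ((\<lambda>x. Phi (f x)) has_real_derivative std_normal_density (f x) * f') (at x within S)"
  using DERIV_chain2[OF Phi_has_real_derivative] .

lemma isCont_Phi: "isCont Phi x"
  using DERIV_isCont[OF Phi_has_real_derivative] .

lemma isCont_Phi' [continuous_intros]: "isCont f x \<Longrightarrow> isCont (\<lambda>x. Phi (f x)) x"
  using isCont_o2[OF _ isCont_Phi] by blast

lemma Phi_strict_mono: "strict_mono Phi"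
proof (rule strict_monoI)
  fix x y :: real
  assume "x < y"
  then show "Phi x < Phi y"
    by (rule DERIV_pos_imp_increasing)
       (auto intro!: exI[of _ "std_normal_density _"] Phi_has_real_derivative normal_density_pos)
qed

lemma Phi_at_bot: "(Phi \<longlongrightarrow> 0) at_bot"
  using std_normal.cdf_lim_at_bot by (simp add: Phi_eq_cdf)

lemma Phi_at_top: "(Phi \<longlongrightarrow> 1) at_top"
  using std_normal.cdf_lim_at_top_prob by (simp add: Phi_eq_cdf)

lemma Phi_less_1: "Phi x < 1"
  using strict_monoD[OF Phi_strict_mono, of x "x + 1"] std_normal.cdf_bounded_prob[of "x + 1"]
  by (simp add: Phi_eq_cdf)

lemma Phi_Phi_inv:
  assumes "0 < p" "p < 1"
  shows "Phi (Phi_inv p) = p"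
proof -
  obtain a where a: "Phi a < p"
    using eventually_happens[OF order_tendstoD(2)[OF Phi_at_bot assms(1)]] by auto
  obtain b where b: "Phi b > p" "a \<le> b"
    using eventually_happens[OF eventually_conj[OF order_tendstoD(1)[OF Phi_at_top assms(2)]
        eventually_ge_at_top[of a]]] by auto
  obtain z where z: "Phi z = p"
    using IVT[of Phi a p b] a b isCont_Phi by auto
  moreover have "Phi_inv p = z"
    unfolding Phi_inv_def
    by (rule the_equality) (use z strict_mono_eq[OF Phi_strict_mono] in auto)
  ultimately show ?thesis
    by simp
qed

lemma std_normal_density_has_real_derivative:
  "(std_normal_density has_real_derivative - x * std_normal_density x) (at x)"
  unfolding normal_density_def
  by (auto intro!: derivative_eq_intros simp: power2_eq_square field_simps)

lemma Mills_ratio_bound: "u * (1 - Phi u) < std_normal_density u"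
proof (cases "u > 0")
  case False
  then show ?thesis
    using normal_density_pos[of 1 0 u] Phi_less_1[of u] by (smt (verit) mult_nonpos_nonneg)
next
  case True
  \<comment> \<open>m increases on (0, \<infinity>) and tends to 0, hence is negative there\<close>
  define m where "m v = (1 - Phi v) - std_normal_density v / v" for v
  have m_deriv: "(m has_real_derivative std_normal_density v / v\<^sup>2) (at v)" if "v > 0" for v
    unfolding m_def using that
    by (auto intro!: derivative_eq_intros std_normal_density_has_real_derivative
          simp: field_simps power2_eq_square)
  have m_less: "m x < m y" if "0 < x" "x < y" for x y
    by (rule DERIV_pos_imp_increasing[OF that(2)])
       (use that in \<open>auto intro!: exI[of _ "std_normal_density _ / _\<^sup>2"] m_deriv
          normal_density_pos divide_pos_pos\<close>)
  have "((\<lambda>v. std_normal_density v / v) \<longlongrightarrow> 0) at_top"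
    unfolding std_normal_density_def by real_asymp
  then have "(m \<longlongrightarrow> (1 - 1) - 0) at_top"
    unfolding m_def by (intro tendsto_intros Phi_at_top)
  moreover have "\<forall>\<^sub>F v in at_top. m (u + 1) \<le> m v"
  proof (rule eventually_mono[OF eventually_gt_at_top[of "u + 1"]])
    fix v assume "u + 1 < v"
    then show "m (u + 1) \<le> m v"
      using m_less[of "u + 1" v] True by simp
  qed
  ultimately have "m (u + 1) \<le> 0"
    by (simp add: tendsto_lowerbound)
  then have "m u < 0"
    using m_less[of u "u + 1"] True by simp
  with True show ?thesis
    by (simp add: m_def field_simps)
qed

lemma has_real_derivative_Phi_tail:
  "((\<lambda>v. 1 - Phi (v + d)) has_real_derivative - std_normal_density (v + d)) (at v)"
  by (auto intro!: derivative_eq_intros)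

lemma std_normal_hazard_less:
  assumes "x < y"
  shows "std_normal_density x / (1 - Phi x) < std_normal_density y / (1 - Phi y)"
proof (rule DERIV_pos_imp_increasing[OF assms])
  fix v :: real
  let ?\<phi> = std_normal_density and ?S = "1 - Phi v"
  have tail: "?S > 0"
    using Phi_less_1[of v] by simp
  have "((\<lambda>v. ?\<phi> v / (1 - Phi v)) has_real_derivative
      (- v * ?\<phi> v * ?S - ?\<phi> v * - ?\<phi> v) / (?S * ?S)) (at v)"
    using DERIV_divide[OF std_normal_density_has_real_derivative has_real_derivative_Phi_tail[of 0]]
      tail by simp
  moreover have "(- v * ?\<phi> v * ?S - ?\<phi> v * - ?\<phi> v) / (?S * ?S) > 0"
  proof -
    have "- v * ?\<phi> v * ?S - ?\<phi> v * - ?\<phi> v = ?\<phi> v * (?\<phi> v - v * ?S)"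
      by (simp add: algebra_simps)
    also have "\<dots> > 0"
      using Mills_ratio_bound[of v] normal_density_pos[of 1 0 v] by simp
    finally show ?thesis
      using tail by simp
  qed
  ultimately show "\<exists>y. ((\<lambda>v. ?\<phi> v / (1 - Phi v)) has_real_derivative y) (at v) \<and> y > 0"
    by auto
qed

lemma std_normal_survival_ratio_less:
  assumes "d > 0" "x < y"
  shows "(1 - Phi (y + d)) / (1 - Phi y) < (1 - Phi (x + d)) / (1 - Phi x)"
proof (rule DERIV_neg_imp_decreasing[OF assms(2)])
  fix v :: real
  let ?\<phi> = std_normal_density and ?S = "\<lambda>v. 1 - Phi v"
  have tails: "?S v > 0" "?S (v + d) > 0"
    using Phi_less_1[of v] Phi_less_1[of "v + d"] by simp_all
  have "((\<lambda>v. ?S (v + d) / ?S v) has_real_derivative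
      (- ?\<phi> (v + d) * ?S v - ?S (v + d) * - ?\<phi> v) / (?S v * ?S v)) (at v)"
    using DERIV_divide[OF has_real_derivative_Phi_tail has_real_derivative_Phi_tail[of 0]]
      tails by simp
  moreover have "?\<phi> v / ?S v < ?\<phi> (v + d) / ?S (v + d)"
    using std_normal_hazard_less[of v "v + d"] assms(1) by simp
  then have "?\<phi> v * ?S (v + d) < ?\<phi> (v + d) * ?S v"
    using tails by (simp add: field_simps)
  then have "(- ?\<phi> (v + d) * ?S v - ?S (v + d) * - ?\<phi> v) / (?S v * ?S v) < 0"
    using tails by (intro divide_neg_pos) (simp add: algebra_simps, simp)
  ultimately show "\<exists>y. ((\<lambda>v. ?S (v + d) / ?S v) has_real_derivative y) (at v) \<and> y < 0"
    by auto
qed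

lemma F_strict_antimono:
  assumes "c < a" "\<theta>\<^sub>1 < \<theta>\<^sub>2"
  shows "F a \<theta>\<^sub>2 c < F a \<theta>\<^sub>1 c"
proof -
  have F_eq: "F a \<theta> c = 1 - (1 - Phi (c - \<theta> + (a - c))) / (1 - Phi (c - \<theta>))" for \<theta>
    using Phi_less_1[of "c - \<theta>"] by (simp add: F_def field_simps)
  show ?thesis
    using std_normal_survival_ratio_less[of "a - c" "c - \<theta>\<^sub>2" "c - \<theta>\<^sub>1"] assms
    by (simp add: F_eq)
qed

lemma isCont_F: "isCont (\<lambda>\<theta>. F a \<theta> c) \<theta>"
  using Phi_less_1[of "c - \<theta>"] unfolding F_def by (intro continuous_intros) auto

lemma theta_p_eqI:
  assumes "c < a" "F a \<theta> c = p"
  shows "theta_p c a p = \<theta>"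
  unfolding theta_p_def
proof (rule the_equality)
  fix \<theta>' assume "F a \<theta>' c = p"
  with assms show "\<theta>' = \<theta>"
    using F_strict_antimono[OF assms(1), of \<theta>' \<theta>] F_strict_antimono[OF assms(1), of \<theta> \<theta>']
    by (cases \<theta>' \<theta> rule: linorder_cases) auto
qed (fact assms(2))

lemma theta_p_between:
  assumes "c < a" "\<theta>\<^sub>1 \<le> \<theta>\<^sub>2" "F a \<theta>\<^sub>2 c \<le> p" "p \<le> F a \<theta>\<^sub>1 c"
  shows "\<theta>\<^sub>1 \<le> theta_p c a p" "theta_p c a p \<le> \<theta>\<^sub>2"
proof -
  obtain \<theta> where \<theta>: "\<theta>\<^sub>1 \<le> \<theta>" "\<theta> \<le> \<theta>\<^sub>2" "F a \<theta> c = p"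
    using IVT2[of "\<lambda>\<theta>. F a \<theta> c"] assms isCont_F by blast
  then show "\<theta>\<^sub>1 \<le> theta_p c a p" "theta_p c a p \<le> \<theta>\<^sub>2"
    using theta_p_eqI[OF assms(1) \<theta>(3)] by simp_all
qed

lemma F_diagonal_tendsto: "((\<lambda>a. F a (a - z) c) \<longlongrightarrow> Phi z) at_top"
proof -
  have "filterlim (\<lambda>a. c - (a - z)) at_bot at_top"
    by real_asymp
  then have "((\<lambda>a. Phi (c - (a - z))) \<longlongrightarrow> 0) at_top"
    by (rule filterlim_compose[OF Phi_at_bot])
  then have "((\<lambda>a. (Phi z - Phi (c - (a - z))) / (1 - Phi (c - (a - z)))) \<longlongrightarrow> (Phi z - 0) / (1 - 0)) at_top"
    by (intro tendsto_intros) auto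
  then show ?thesis
    by (simp add: F_def)
qed

theorem theorem2:
  fixes c p :: real
  assumes "0 < p" and "p < 1"
  shows "((\<lambda>x_obs. theta_p c x_obs p - (x_obs - Phi_inv p)) \<longlongrightarrow> 0) at_top"
proof (rule tendstoI)
  fix e :: real assume "e > 0"
  define q where "q = Phi_inv p"
  have "Phi (q - e / 2) < p" "p < Phi (q + e / 2)"
    using strict_monoD[OF Phi_strict_mono, of "q - e / 2" q] strict_monoD[OF Phi_strict_mono, of q "q + e / 2"]
      Phi_Phi_inv[OF assms] \<open>e > 0\<close>
    by (simp_all add: q_def)
  then have "\<forall>\<^sub>F a in at_top. F a (a - (q - e / 2)) c < p" "\<forall>\<^sub>F a in at_top. p < F a (a - (q + e / 2)) c"
    using order_tendstoD[OF F_diagonal_tendsto] by blast+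
  then show "\<forall>\<^sub>F a in at_top. dist (theta_p c a p - (a - Phi_inv p)) 0 < e"
    using eventually_gt_at_top[of c]
  proof eventually_elim
    case (elim a)
    then have "a - (q + e / 2) \<le> theta_p c a p" "theta_p c a p \<le> a - (q - e / 2)"
      using theta_p_between[of c a "a - (q + e / 2)" "a - (q - e / 2)" p] \<open>e > 0\<close> by auto
    with \<open>e > 0\<close> show ?case
      by (simp add: q_def dist_real_def abs_less_iff)
  qed
qed

end
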